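(* Let $\tau:\mathcal{D}_{\mathbf{V}_L}\to\mathcal{D}_{\mathbf{V}_H}$ be a constructive abstraction function w.r.t. clusterings $\mathbb{C}$ and $\mathbb{D}$. If $\mathbf{X}_L$ is a union of clusters in $\mathbb{C}$ (i.e., $\mathbf{X}_L=\bigcup_{\mathbf{C}_i\in\mathbb{C}'}\mathbf{C}_i$ for some $\mathbb{C}'\subseteq\mathbb{C}$), then for every $\mathbf{x}_L\in\mathcal{D}_{\mathbf{X}_L}$, $\omega_\tau(\mathbf{X}_L\leftarrow\mathbf{x}_L)$ exists and equals $\tau(\mathbf{X}_L)\leftarrow\tau(\mathbf{x}_L)$.
   Context: $\mathcal{D}_{\mathbf{X}}$ denotes the (Cartesian product) domain of a set of variables $\mathbf{X}$. An intervariable clustering of $\mathbf{V}_L$ is a set $\mathbb{C}=\{\mathbf{C}_1,\dots,\mathbf{C}_n\}$ forming a partition of a subset of $\mathbf{V}_L$; an intravariable clustering is $\mathbb{D}=\{\mathbb{D}_{\mathbf{C}_i}\}$ where $\mathbb{D}_{\mathbf{C}_i}=\{\mathcal{D}^1_{\mathbf{C}_i},\dots,\mathcal{D}^{m_i}_{\mathbf{C}_i}\}$ is a partition of $\mathcal{D}_{\mathbf{C}_i}$. A constructive abstraction function w.r.t. $\mathbb{C},\mathbb{D}$: $\mathbf{V}_H=\{V_{H,1},\dots,V_{H,n}\}$ in bijection with $\mathbb{C}$, $\mathcal{D}_{V_{H,i}}=\{v^1_{H,i},\dots,v^{m_i}_{H,i}\}$ in bijection with $\mathbb{D}_{\mathbf{C}_i}$,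 and $\tau(\mathbf{v}_L)=(\tau_{\mathbf{C}_i}(\mathbf{c}_i):\mathbf{C}_i\in\mathbb{C})$ with $\tau_{\mathbf{C}_i}(\mathbf{c}_i)=v^j_{H,i}$ iff $\mathbf{c}_i\in\mathcal{D}^j_{\mathbf{C}_i}$; for a union of clusters $\mathbf{W}_L$, $\tau(\mathbf{w}_L)=(\tau_{\mathbf{C}_i}(\mathbf{c}_i):\mathbf{C}_i\subseteq\mathbf{W}_L)$ and $\tau(\mathbf{W}_L)=\{V_{H,i}:\mathbf{C}_i\subseteq\mathbf{W}_L\}$. For a set of variables $\mathbf{V}$ and a value $\mathbf{x}$ of $\mathbf{X}\subseteq\mathbf{V}$, $\mathrm{Rst}(\mathbf{V},\mathbf{x})=\{\mathbf{v}\in\mathcal{D}_{\mathbf{V}}:\mathbf{v}\text{ is consistent with }\mathbf{x}\}$; for a set $\mathbf{T}\subseteq\mathcal{D}_{\mathbf{V}_L}$, $\tau(\mathbf{T})=\{\tau(\mathbf{v}):\mathbf{v}\in\mathbf{T}\}$. The map $\omega_\tau$ is defined by $\omega_\tau(\mathbf{X}_L\leftarrow\mathbf{x}_L)=(\mathbf{X}_H\leftarrow\mathbf{x}_H)$ whenever $\tau(\mathrm{Rst}(\mathbf{V}_L,\mathbf{x}_L))=\mathrm{Rst}(\mathbf{V}_H,\mathbf{x}_H)$ (it exists when such an intervention $\mathbf{X}_H\leftarrow\mathbf{x}_H$ exists). *)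

theory Defs
  imports Main "HOL-Library.FuncSet" "HOL-Library.Disjoint_Sets"
begin

text \<open>A value of a set of variables X is an extensional function in PiE X D
  (undefined outside X).\<close>

definition Rst :: "('v \<Rightarrow> 'a set) \<Rightarrow> 'v set \<Rightarrow> ('v \<Rightarrow> 'a) \<Rightarrow> 'v set \<Rightarrow> ('v \<Rightarrow> 'a) set" where
  "Rst D V x X = {v \<in> PiE V D. \<forall>u\<in>X. v u = x u}"

definition constructive_abstraction ::
  "('v \<Rightarrow> 'a set) \<Rightarrow> 'v set \<Rightarrow> 'v set set \<Rightarrow> ('v set \<Rightarrow> ('v \<Rightarrow> 'a) set set)
   \<Rightarrow> ('h \<Rightarrow> 'b set) \<Rightarrow> 'h set \<Rightarrow> ('v set \<Rightarrow> 'h) \<Rightarrow> ('v set \<Rightarrow> ('v \<Rightarrow> 'a) set \<Rightarrow> 'b) \<Rightarrow> bool" where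
  "constructive_abstraction D VL Cs Dp DH VH hv hval \<longleftrightarrow>
     \<Union>Cs \<subseteq> VL \<and> partition_on (\<Union>Cs) Cs \<and>
     (\<forall>C\<in>Cs. partition_on (PiE C D) (Dp C)) \<and>
     bij_betw hv Cs VH \<and>
     (\<forall>C\<in>Cs. bij_betw (hval C) (Dp C) (DH (hv C)))"

definition tau_vars :: "'v set set \<Rightarrow> ('v set \<Rightarrow> 'h) \<Rightarrow> 'v set \<Rightarrow> 'h set" where
  "tau_vars Cs hv W = hv ` {C \<in> Cs. C \<subseteq> W}"

definition tau_asg ::
  "'v set set \<Rightarrow> ('v set \<Rightarrow> ('v \<Rightarrow> 'a) set set) \<Rightarrow> ('v set \<Rightarrow> 'h) \<Rightarrow> ('v set \<Rightarrow> ('v \<Rightarrow> 'a) set \<Rightarrow> 'b)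
   \<Rightarrow> 'v set \<Rightarrow> ('v \<Rightarrow> 'a) \<Rightarrow> ('h \<Rightarrow> 'b)" where
  "tau_asg Cs Dp hv hval W w =
     (\<lambda>h. if h \<in> tau_vars Cs hv W
          then (let C = the_inv_into Cs hv h in hval C (THE B. B \<in> Dp C \<and> restrict w C \<in> B))
          else undefined)"

definition omega_tau ::
  "('v \<Rightarrow> 'a set) \<Rightarrow> 'v set \<Rightarrow> 'v set set \<Rightarrow> ('v set \<Rightarrow> ('v \<Rightarrow> 'a) set set)
   \<Rightarrow> ('h \<Rightarrow> 'b set) \<Rightarrow> 'h set \<Rightarrow> ('v set \<Rightarrow> 'h) \<Rightarrow> ('v set \<Rightarrow> ('v \<Rightarrow> 'a) set \<Rightarrow> 'b)
   \<Rightarrow> 'v set \<Rightarrow> ('v \<Rightarrow> 'a) \<Rightarrow> 'h set \<Rightarrow> ('h \<Rightarrow> 'b) \<Rightarrow> bool" where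
  "omega_tau D VL Cs Dp DH VH hv hval XL xL XH xH \<longleftrightarrow>
     XH \<subseteq> VH \<and> xH \<in> PiE XH DH \<and>
     tau_asg Cs Dp hv hval VL ` Rst D VL xL XL = Rst DH VH xH XH"

end

theory Submission
  imports Defs
begin

text \<open>\<open>\<tau>\<close> only sees, cluster by cluster, the block of the intravariable partition that
  contains the low-level value.  Hence values agreeing with \<open>x\<^sub>L\<close> on \<open>X\<^sub>L\<close> are mapped to
  values agreeing with \<open>\<tau>(x\<^sub>L)\<close> on \<open>\<tau>(X\<^sub>L)\<close>.  Conversely, such a high-level value \<open>w\<close>
  is hit by gluing \<open>x\<^sub>L\<close> on the clusters inside \<open>X\<^sub>L\<close>, representatives of the blocks
  prescribed by \<open>w\<close> on the other clusters, and arbitrary values on the unclustered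
  variables (this needs nonempty domains).  As \<open>X\<^sub>L\<close> is a union of clusters, no cluster
  receives both kinds of constraint.\<close>

abbreviation block_of :: "'a set set \<Rightarrow> 'a \<Rightarrow> 'a set" where
  "block_of P x \<equiv> THE B. B \<in> P \<and> x \<in> B"

lemma block_of_eq:
  assumes "partition_on A P" "B \<in> P" "x \<in> B"
  shows "block_of P x = B"
proof (rule the_equality)
  show "B \<in> P \<and> x \<in> B" using assms(2,3) ..
next
  fix B' assume "B' \<in> P \<and> x \<in> B'"
  with assms show "B' = B"
    by (meson disjointD disjoint_iff partition_onD2)
qed

lemma block_of_in:
  assumes "partition_on A P" "x \<in> A"
  shows "block_of P x \<in> P" and "x \<in> block_of P x"
proof -
  obtain B where "B \<in> P" "x \<in> B"
    using assms partition_onD1 by blast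
  with block_of_eq[OF assms(1)] show "block_of P x \<in> P" "x \<in> block_of P x"
    by simp_all
qed

lemma partition_on_glue_PiE:
  assumes "partition_on A P" "A \<subseteq> V" "\<forall>u\<in>V. D u \<noteq> {}"
    and "\<And>B. B \<in> P \<Longrightarrow> F B \<in> PiE B D"
  obtains v where "v \<in> PiE V D" "\<And>B. B \<in> P \<Longrightarrow> restrict v B = F B"
proof
  define v where "v u = (if u \<in> A then F (block_of P u) u
                         else if u \<in> V then SOME a. a \<in> D u else undefined)" for u
  have v_block: "v u = F B u" if "B \<in> P" "u \<in> B" for B u
    using that block_of_eq[OF assms(1) that] partition_onD1[OF assms(1)]
    by (auto simp: v_def)
  show "restrict v B = F B" if "B \<in> P" for B
  proof
    fix u show "restrict v B u = F B u"
      using v_block[OF that] assms(4)[OF that] by (auto simp: PiE_def extensional_def)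
  qed
  show "v \<in> PiE V D"
  proof (rule PiE_I)
    fix u assume "u \<in> V"
    show "v u \<in> D u"
    proof (cases "u \<in> A")
      case True
      then obtain B where "B \<in> P" "u \<in> B"
        using partition_onD1[OF assms(1)] by blast
      then show ?thesis
        using v_block assms(4) by fastforce
    next
      case False
      then show ?thesis
        using \<open>u \<in> V\<close> assms(3) by (simp add: v_def some_in_eq)
    qed
  next
    fix u assume "u \<notin> V"
    then show "v u = undefined" using assms(2) by (auto simp: v_def)
  qed
qed

lemma tau_asg_outside_tau_vars:
  "h \<notin> tau_vars Cs hv W \<Longrightarrow> tau_asg Cs Dp hv hval W w h = undefined"
  by (simp add: tau_asg_def)

locale constructive_abstraction_function =
  fixes D :: "'v \<Rightarrow> 'a set" and VL :: "'v set" and Cs :: "'v set set"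
    and Dp :: "'v set \<Rightarrow> ('v \<Rightarrow> 'a) set set"
    and DH :: "'h \<Rightarrow> 'b set" and VH :: "'h set" and hv :: "'v set \<Rightarrow> 'h"
    and hval :: "'v set \<Rightarrow> ('v \<Rightarrow> 'a) set \<Rightarrow> 'b"
  assumes constructive: "constructive_abstraction D VL Cs Dp DH VH hv hval"
begin

abbreviation tau :: "'v set \<Rightarrow> ('v \<Rightarrow> 'a) \<Rightarrow> 'h \<Rightarrow> 'b" where
  "tau \<equiv> tau_asg Cs Dp hv hval"

lemma clusters_subset: "\<Union>Cs \<subseteq> VL"
  and partition_clusters: "partition_on (\<Union>Cs) Cs"
  and partition_cluster_values: "C \<in> Cs \<Longrightarrow> partition_on (PiE C D) (Dp C)"
  and bij_clusters: "bij_betw hv Cs VH"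
  and bij_cluster_values: "C \<in> Cs \<Longrightarrow> bij_betw (hval C) (Dp C) (DH (hv C))"
  using constructive by (auto simp: constructive_abstraction_def)

lemma tau_asg_cluster:
  assumes "C \<in> Cs" "C \<subseteq> W"
  shows "tau W w (hv C) = hval C (block_of (Dp C) (restrict w C))"
  using assms bij_betw_imp_inj_on[OF bij_clusters]
  by (auto simp: tau_asg_def tau_vars_def the_inv_into_f_f)

lemma tau_vars_subset: "tau_vars Cs hv W \<subseteq> VH"
  using bij_betw_imp_surj_on[OF bij_clusters] by (auto simp: tau_vars_def)

lemma tau_vars_VL: "tau_vars Cs hv VL = VH"
  using clusters_subset bij_betw_imp_surj_on[OF bij_clusters] by (auto simp: tau_vars_def)

lemma tau_asg_PiE:
  assumes "w \<in> PiE W D"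
  shows "tau W w \<in> PiE (tau_vars Cs hv W) DH"
proof (rule PiE_I)
  fix h assume "h \<in> tau_vars Cs hv W"
  then obtain C where C: "C \<in> Cs" "C \<subseteq> W" and h: "h = hv C"
    by (auto simp: tau_vars_def)
  have "restrict w C \<in> PiE C D"
    using assms C(2) by (auto simp: PiE_def Pi_def)
  then have "block_of (Dp C) (restrict w C) \<in> Dp C"
    by (rule block_of_in[OF partition_cluster_values[OF C(1)]])
  then show "tau W w h \<in> DH h"
    using h tau_asg_cluster[OF C] bij_betwE[OF bij_cluster_values[OF C(1)]] by simp
qed (rule tau_asg_outside_tau_vars)

lemma cluster_value_preimage:
  assumes "C \<in> Cs" "b \<in> DH (hv C)"
  shows "\<exists>f\<in>PiE C D. hval C (block_of (Dp C) f) = b"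
proof -
  obtain B where B: "B \<in> Dp C" "hval C B = b"
    using assms bij_cluster_values[OF assms(1)] by (metis bij_betw_def imageE)
  have "B \<noteq> {}"
    using B(1) partition_onD3[OF partition_cluster_values[OF assms(1)]] by blast
  then obtain f where "f \<in> B" by blast
  moreover have "B \<subseteq> PiE C D"
    using B(1) partition_onD1[OF partition_cluster_values[OF assms(1)]] by blast
  ultimately show ?thesis
    using B block_of_eq[OF partition_cluster_values[OF assms(1)] B(1)] by blast
qed

lemma image_tau_asg_Rst_subset:
  "tau VL ` Rst D VL x X \<subseteq> Rst DH VH (tau X x) (tau_vars Cs hv X)"
proof
  fix w assume "w \<in> tau VL ` Rst D VL x X"
  then obtain v where v: "v \<in> PiE VL D" "\<forall>u\<in>X. v u = x u" and w: "w = tau VL v"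
    by (auto simp: Rst_def)
  have "w \<in> PiE VH DH"
    using tau_asg_PiE[OF v(1)] w by (simp add: tau_vars_VL)
  moreover have "w h = tau X x h" if h_X: "h \<in> tau_vars Cs hv X" for h
  proof -
    obtain C where C: "C \<in> Cs" "C \<subseteq> X" and h: "h = hv C"
      using h_X by (auto simp: tau_vars_def)
    have "C \<subseteq> VL" using C(1) clusters_subset by blast
    moreover have "restrict v C = restrict x C"
      using v(2) C(2) by (force simp: restrict_def)
    ultimately show ?thesis
      using w h tau_asg_cluster[OF C(1)] C by simp
  qed
  ultimately show "w \<in> Rst DH VH (tau X x) (tau_vars Cs hv X)"
    by (simp add: Rst_def)
qed

lemma Rst_subset_image_tau_asg:
  assumes "Cs' \<subseteq> Cs" "X = \<Union>Cs'" "x \<in> PiE X D" "\<forall>u\<in>VL. D u \<noteq> {}"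
  shows "Rst DH VH (tau X x) (tau_vars Cs hv X) \<subseteq> tau VL ` Rst D VL x X"
proof
  fix w assume "w \<in> Rst DH VH (tau X x) (tau_vars Cs hv X)"
  then have w: "w \<in> PiE VH DH" "\<forall>h\<in>tau_vars Cs hv X. w h = tau X x h"
    by (auto simp: Rst_def)
  define F where "F C = (if C \<subseteq> X then restrict x C
                         else SOME f. f \<in> PiE C D \<and> hval C (block_of (Dp C) f) = w (hv C))"
    for C
  have F: "F C \<in> PiE C D \<and> hval C (block_of (Dp C) (F C)) = w (hv C)" if "C \<in> Cs" for C
  proof (cases "C \<subseteq> X")
    case True
    then have "hv C \<in> tau_vars Cs hv X" using that by (auto simp: tau_vars_def)
    then show ?thesis
      using True w(2) tau_asg_cluster[OF that True] assms(3) by (auto simp: F_def PiE_def Pi_def)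
  next
    case False
    have "w (hv C) \<in> DH (hv C)"
      using w(1) bij_betwE[OF bij_clusters] that by blast
    then have "\<exists>f. f \<in> PiE C D \<and> hval C (block_of (Dp C) f) = w (hv C)"
      using cluster_value_preimage[OF that] by blast
    from someI_ex[OF this] show ?thesis
      using False by (simp add: F_def)
  qed
  obtain v where v: "v \<in> PiE VL D" and v_cluster: "\<And>C. C \<in> Cs \<Longrightarrow> restrict v C = F C"
    using partition_on_glue_PiE[OF partition_clusters clusters_subset assms(4)] F by blast
  have "v u = x u" if u_X: "u \<in> X" for u
  proof -
    obtain C where C: "C \<in> Cs'" "u \<in> C" using u_X assms(2) by blast
    then have "C \<in> Cs" "C \<subseteq> X" using assms(1,2) by auto
    then have "restrict v C = restrict x C" using v_cluster by (simp add: F_def)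
    then show ?thesis using C(2) by (metis restrict_apply')
  qed
  with v have "v \<in> Rst D VL x X" by (simp add: Rst_def)
  moreover have "tau VL v = w"
  proof
    fix h show "tau VL v h = w h"
    proof (cases "h \<in> VH")
      case True
      then obtain C where "C \<in> Cs" "h = hv C"
        using bij_betw_imp_surj_on[OF bij_clusters] by blast
      then show ?thesis
        using tau_asg_cluster[of C VL v] clusters_subset v_cluster F by auto
    next
      case False
      then show ?thesis
        using w(1) tau_asg_outside_tau_vars tau_vars_VL by (metis PiE_E)
    qed
  qed
  ultimately show "w \<in> tau VL ` Rst D VL x X" by blast
qed

end

theorem lemma3:
  fixes D :: "'v \<Rightarrow> 'a set" and VL :: "'v set" and Cs :: "'v set set"
    and Dp :: "'v set \<Rightarrow> ('v \<Rightarrow> 'a) set set"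
    and DH :: "'h \<Rightarrow> 'b set" and VH :: "'h set" and hv :: "'v set \<Rightarrow> 'h"
    and hval :: "'v set \<Rightarrow> ('v \<Rightarrow> 'a) set \<Rightarrow> 'b"
  assumes "constructive_abstraction D VL Cs Dp DH VH hv hval"
    and "\<forall>u\<in>VL. D u \<noteq> {}"
    and "Cs' \<subseteq> Cs" and "XL = \<Union>Cs'"
    and "xL \<in> PiE XL D"
  shows "omega_tau D VL Cs Dp DH VH hv hval XL xL
           (tau_vars Cs hv XL) (tau_asg Cs Dp hv hval XL xL)"
proof -
  interpret constructive_abstraction_function D VL Cs Dp DH VH hv hval
    by unfold_locales (fact assms(1))
  show ?thesis
    unfolding omega_tau_def
    using tau_vars_subset tau_asg_PiE[OF assms(5)] image_tau_asg_Rst_subset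
      Rst_subset_image_tau_asg[OF assms(3,4,5,2)]
    by blast
qed

end
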